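(* Let $F:\mathbb R^m\to\mathbb R^r$, $C\in\mathbb R^{r\times n}$ with nonzero columns, $\Theta(x,y)=\frac12\|F(x)-Cy\|^2$, and fix $x$. Consider the double greedy procedure: set $\underline y^0=\mathbf 0$, $\overline y^0=\mathbf 1$; for $k=1,\dots,n$ let $a=\Theta(x,\underline y^{k-1}+\mathbf e_k)-\Theta(x,\underline y^{k-1})$ and $b=\Theta(x,\overline y^{k-1}-\mathbf e_k)-\Theta(x,\overline y^{k-1})$; if $a\ge b$ set $\underline y^k=\underline y^{k-1}+\mathbf e_k$, $\overline y^k=\overline y^{k-1}$, otherwise set $\underline y^k=\underline y^{k-1}$, $\overline y^k=\overline y^{k-1}-\mathbf e_k$; return $\hat y=\underline y^n=\overline y^n$. If $C$ is obtuse, then $\Theta(x,\hat y)\ge\frac13\max_{y\in\{0,1\}^n}\Theta(x,y)$. If $C$ has mutually orthogonal columns, then $\hat y$ is a maximizer of $\Theta(x,\cdot)$ over $\{0,1\}^n$.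
   Context: $C=(c_1,\dots,c_n)$ is obtuse if $c_i^\top c_j\le0$ for all $i\neq j$. $\mathbf e_k$ is the $k$-th standard unit vector, $\mathbf 0,\mathbf 1$ the all-zeros and all-ones vectors in $\mathbb R^n$. *)

theory Defs
  imports "HOL-Analysis.Analysis"
begin

(* Vectors y in R^n are represented as functions nat => real, only entries j < n matter.
   The matrix C in R^(r x n) is given by its columns C j :: real^'r for j < n. *)

definition matvec :: "nat \<Rightarrow> (nat \<Rightarrow> real^'r) \<Rightarrow> (nat \<Rightarrow> real) \<Rightarrow> real^'r" where
  "matvec n C y = (\<Sum>j<n. y j *\<^sub>R C j)"

definition Theta :: "('m \<Rightarrow> real^'r) \<Rightarrow> nat \<Rightarrow> (nat \<Rightarrow> real^'r) \<Rightarrow> 'm \<Rightarrow> (nat \<Rightarrow> real) \<Rightarrow> real" where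
  "Theta F n C x y = (1/2) * (norm (F x - matvec n C y))\<^sup>2"

(* e_k for the 1-based index k corresponds to the 0-based index k-1; step Suc k processes index k *)
fun double_greedy :: "('m \<Rightarrow> real^'r) \<Rightarrow> nat \<Rightarrow> (nat \<Rightarrow> real^'r) \<Rightarrow> 'm \<Rightarrow> nat
     \<Rightarrow> (nat \<Rightarrow> real) \<times> (nat \<Rightarrow> real)" where
  "double_greedy F n C x 0 = ((\<lambda>j. 0), (\<lambda>j. if j < n then 1 else 0))"
| "double_greedy F n C x (Suc k) =
     (let (lo, hi) = double_greedy F n C x k;
          a = Theta F n C x (lo(k := lo k + 1)) - Theta F n C x lo;
          b = Theta F n C x (hi(k := hi k - 1)) - Theta F n C x hi
      in if a \<ge> b then (lo(k := lo k + 1), hi) else (lo, hi(k := hi k - 1)))"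

definition dg_output :: "('m \<Rightarrow> real^'r) \<Rightarrow> nat \<Rightarrow> (nat \<Rightarrow> real^'r) \<Rightarrow> 'm \<Rightarrow> nat \<Rightarrow> real" where
  "dg_output F n C x = fst (double_greedy F n C x n)"

definition binvecs :: "nat \<Rightarrow> (nat \<Rightarrow> real) set" where
  "binvecs n = {y. (\<forall>j<n. y j = 0 \<or> y j = 1) \<and> (\<forall>j\<ge>n. y j = 0)}"

definition obtuse :: "nat \<Rightarrow> (nat \<Rightarrow> real^'r) \<Rightarrow> bool" where
  "obtuse n C \<longleftrightarrow> (\<forall>i<n. \<forall>j<n. i \<noteq> j \<longrightarrow> C i \<bullet> C j \<le> 0)"

definition orthogonal_cols :: "nat \<Rightarrow> (nat \<Rightarrow> real^'r) \<Rightarrow> bool" where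
  "orthogonal_cols n C \<longleftrightarrow> (\<forall>i<n. \<forall>j<n. i \<noteq> j \<longrightarrow> C i \<bullet> C j = 0)"

end

(* Theta(x, y) = 1/2 |F x - C y|^2 has marginal gain 1/2 |C_k|^2 - (F x - C y) . C_k in
   coordinate k, and moving y to z changes it by the sum of (z_j - y_j) C_j . C_k over j.
   So for obtuse C the gains shrink as y grows (Theta is submodular), and for orthogonal C
   they do not depend on the other coordinates (Theta is modular).  The deterministic double
   greedy analysis of Buchbinder, Feldman, Naor and Schwartz then applies: the vector OPT_i
   that agrees with the greedy choices on the first i coordinates and with an optimum OPT on
   the rest loses at most the greedy gain of step i, so telescoping gives
   f(OPT) - f(X_n) <= 2 f(X_n) for a nonnegative objective f, while for a modular objective
   OPT_i never loses value. *)

theory Submission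
  imports Defs
begin

definition marginal :: "((nat \<Rightarrow> real) \<Rightarrow> real) \<Rightarrow> (nat \<Rightarrow> real) \<Rightarrow> nat \<Rightarrow> real" where
  "marginal f y k = f (y(k := y k + 1)) - f y"

definition diminishing_returns :: "nat \<Rightarrow> ((nat \<Rightarrow> real) \<Rightarrow> real) \<Rightarrow> bool" where
  "diminishing_returns n f \<longleftrightarrow>
     (\<forall>y z k. k < n \<longrightarrow> y k = z k \<longrightarrow> (\<forall>j<n. y j \<le> z j) \<longrightarrow> marginal f z k \<le> marginal f y k)"

definition modular :: "nat \<Rightarrow> ((nat \<Rightarrow> real) \<Rightarrow> real) \<Rightarrow> bool" where
  "modular n f \<longleftrightarrow> (\<forall>y z k. k < n \<longrightarrow> y k = z k \<longrightarrow> marginal f z k = marginal f y k)"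

lemma modular_imp_diminishing_returns: "modular n f \<Longrightarrow> diminishing_returns n f"
  unfolding modular_def diminishing_returns_def by (metis order.refl)

fun dgreedy :: "((nat \<Rightarrow> real) \<Rightarrow> real) \<Rightarrow> nat \<Rightarrow> nat \<Rightarrow> (nat \<Rightarrow> real) \<times> (nat \<Rightarrow> real)" where
  "dgreedy f n 0 = ((\<lambda>j. 0), (\<lambda>j. if j < n then 1 else 0))"
| "dgreedy f n (Suc k) =
     (let (lo, hi) = dgreedy f n k;
          a = f (lo(k := lo k + 1)) - f lo;
          b = f (hi(k := hi k - 1)) - f hi
      in if a \<ge> b then (lo(k := lo k + 1), hi) else (lo, hi(k := hi k - 1)))"

lemma double_greedy_eq_dgreedy: "double_greedy F n C x k = dgreedy (Theta F n C x) n k"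
  by (induction k) simp_all

lemma dg_output_eq_dgreedy: "dg_output F n C x = fst (dgreedy (Theta F n C x) n n)"
  by (simp add: dg_output_def double_greedy_eq_dgreedy)

definition dgreedy_inv :: "nat \<Rightarrow> nat \<Rightarrow> (nat \<Rightarrow> real) \<Rightarrow> (nat \<Rightarrow> real) \<Rightarrow> bool" where
  "dgreedy_inv n i lo hi \<longleftrightarrow>
     (\<forall>j<i. lo j = hi j \<and> (lo j = 0 \<or> lo j = 1)) \<and>
     (\<forall>j\<ge>i. lo j = 0 \<and> hi j = (if j < n then 1 else 0))"

lemma dgreedy_inv_holds:
  "i \<le> n \<Longrightarrow> dgreedy_inv n i (fst (dgreedy f n i)) (snd (dgreedy f n i))"
proof (induction i)
  case 0
  then show ?case by (simp add: dgreedy_inv_def)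
next
  case (Suc i)
  then have "dgreedy_inv n i (fst (dgreedy f n i)) (snd (dgreedy f n i))" by simp
  with Suc.prems show ?case
    by (auto simp: dgreedy_inv_def Let_def case_prod_beta less_Suc_eq)
qed

definition hybrid :: "nat \<Rightarrow> (nat \<Rightarrow> real) \<Rightarrow> (nat \<Rightarrow> real) \<Rightarrow> nat \<Rightarrow> real" where
  "hybrid i lo opt = (\<lambda>j. if j < i then lo j else opt j)"

lemma hybrid_0 [simp]: "hybrid 0 lo opt = opt"
  by (simp add: hybrid_def)

lemma dgreedy_final:
  fixes f :: "(nat \<Rightarrow> real) \<Rightarrow> real"
  shows "snd (dgreedy f n n) = fst (dgreedy f n n)" and "fst (dgreedy f n n) \<in> binvecs n"
proof -
  have inv: "dgreedy_inv n n (fst (dgreedy f n n)) (snd (dgreedy f n n))"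
    by (rule dgreedy_inv_holds) simp
  then show "snd (dgreedy f n n) = fst (dgreedy f n n)"
    unfolding dgreedy_inv_def fun_eq_iff by (metis not_le)
  show "fst (dgreedy f n n) \<in> binvecs n"
    using inv by (auto simp: dgreedy_inv_def binvecs_def)
qed

lemma hybrid_final:
  assumes "opt \<in> binvecs n"
  shows "hybrid n (fst (dgreedy f n n)) opt = fst (dgreedy f n n)"
proof -
  have "dgreedy_inv n n (fst (dgreedy f n n)) (snd (dgreedy f n n))"
    by (rule dgreedy_inv_holds) simp
  with assms show ?thesis
    by (auto simp: hybrid_def dgreedy_inv_def binvecs_def)
qed

lemma dgreedy_Suc_marginal:
  fixes f :: "(nat \<Rightarrow> real) \<Rightarrow> real"
  assumes i: "i < n"
  defines "lo \<equiv> \<lambda>k. fst (dgreedy f n k)" and "hi \<equiv> \<lambda>k. snd (dgreedy f n k)"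
  defines "r \<equiv> marginal f (lo i) i" and "p \<equiv> marginal f ((hi i)(i := 0)) i"
  shows "(lo (Suc i), hi (Suc i))
           = (if r \<ge> - p then ((lo i)(i := 1), hi i) else (lo i, (hi i)(i := 0)))"
    and "(f (lo (Suc i)) - f (lo i)) + (f (hi (Suc i)) - f (hi i)) = max r (- p)"
proof -
  have "dgreedy_inv n i (lo i) (hi i)"
    unfolding lo_def hi_def using i by (intro dgreedy_inv_holds) simp
  then have lo_i: "lo i i = 0" and hi_i: "hi i i = 1"
    using i by (auto simp: dgreedy_inv_def)
  have r_eq: "r = f ((lo i)(i := 1)) - f (lo i)"
    using lo_i by (simp add: r_def marginal_def)
  have p_eq: "p = f (hi i) - f ((hi i)(i := 0))"
    using hi_i by (simp add: p_def marginal_def fun_upd_idem)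
  show next_pair: "(lo (Suc i), hi (Suc i))
           = (if r \<ge> - p then ((lo i)(i := 1), hi i) else (lo i, (hi i)(i := 0)))"
    using lo_i hi_i r_eq p_eq by (simp add: lo_def hi_def Let_def case_prod_beta)
  show "(f (lo (Suc i)) - f (lo i)) + (f (hi (Suc i)) - f (hi i)) = max r (- p)"
    using next_pair r_eq p_eq by (auto split: if_splits)
qed

lemma hybrid_step_loss:
  fixes f :: "(nat \<Rightarrow> real) \<Rightarrow> real"
  assumes dr: "diminishing_returns n f" and i: "i < n" and opt: "opt \<in> binvecs n"
  defines "lo \<equiv> \<lambda>k. fst (dgreedy f n k)" and "hi \<equiv> \<lambda>k. snd (dgreedy f n k)"
  shows "f (hybrid i (lo i) opt) - f (hybrid (Suc i) (lo (Suc i)) opt)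
           \<le> (f (lo (Suc i)) - f (lo i)) + (f (hi (Suc i)) - f (hi i))"
    and "modular n f \<Longrightarrow> f (hybrid i (lo i) opt) \<le> f (hybrid (Suc i) (lo (Suc i)) opt)"
proof -
  have inv: "dgreedy_inv n i (lo i) (hi i)"
    unfolding lo_def hi_def using i by (intro dgreedy_inv_holds) simp
  define w where "w = (hybrid i (lo i) opt)(i := 0)"
  define h where "h = (hi i)(i := 0)"
  define p where "p = marginal f h i"
  define q where "q = marginal f w i"
  define r where "r = marginal f (lo i) i"
  have lo_w: "\<forall>j<n. lo i j \<le> w j" and w_h: "\<forall>j<n. w j \<le> h j"
    using inv opt by (auto simp: dgreedy_inv_def binvecs_def w_def h_def hybrid_def)
  have lo_w_i: "lo i i = w i" and w_h_i: "w i = h i"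
    using inv i by (auto simp: dgreedy_inv_def w_def h_def hybrid_def)
  have mono: "marginal f z i \<le> marginal f y i" if "y i = z i" and "\<forall>j<n. y j \<le> z j" for y z
    using dr i that unfolding diminishing_returns_def by blast
  have "p \<le> q"
    unfolding p_def q_def using w_h_i w_h by (rule mono)
  have "q \<le> r"
    unfolding q_def r_def using lo_w_i lo_w by (rule mono)
  have "(lo (Suc i), hi (Suc i)) = (if r \<ge> - p then ((lo i)(i := 1), hi i) else (lo i, h))"
    using dgreedy_Suc_marginal(1)[OF i, of f] by (simp add: lo_def hi_def p_def r_def h_def)
  then have next_hybrid: "hybrid (Suc i) (lo (Suc i)) opt = (if r \<ge> - p then w(i := 1) else w)"
    using lo_w_i by (auto simp: hybrid_def w_def fun_eq_iff)
  have cur_hybrid: "hybrid i (lo i) opt = (if opt i = 1 then w(i := 1) else w)"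
    using opt i by (auto simp: hybrid_def w_def fun_eq_iff binvecs_def)
  have gain: "(f (lo (Suc i)) - f (lo i)) + (f (hi (Suc i)) - f (hi i)) = max r (- p)"
    using dgreedy_Suc_marginal(2)[OF i, of f] by (simp add: lo_def hi_def p_def r_def h_def)
  have f_w1: "f (w(i := 1)) = f w + q"
    by (simp add: q_def w_def marginal_def)
  \<comment> \<open>If OPT_i has a 1 at i and the greedy step writes 0, the loss is q \<le> r < - p;
    in the opposite case it is - q \<le> - p \<le> r; otherwise it is 0 \<le> max r (- p), as p \<le> r.\<close>
  show "f (hybrid i (lo i) opt) - f (hybrid (Suc i) (lo (Suc i)) opt)
          \<le> (f (lo (Suc i)) - f (lo i)) + (f (hi (Suc i)) - f (hi i))"
    unfolding gain next_hybrid cur_hybrid using \<open>p \<le> q\<close> \<open>q \<le> r\<close> f_w1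
    by (cases "opt i = 1"; cases "- p \<le> r") simp_all
  assume "modular n f"
  then have same: "marginal f z i = marginal f y i" if "y i = z i" for y z
    using i that unfolding modular_def by blast
  have "p = q" "q = r"
    unfolding p_def q_def r_def using same[of w h] same[of "lo i" w] w_h_i lo_w_i by simp_all
  then show "f (hybrid i (lo i) opt) \<le> f (hybrid (Suc i) (lo (Suc i)) opt)"
    unfolding next_hybrid cur_hybrid using f_w1
    by (cases "opt i = 1"; cases "- p \<le> r") simp_all
qed

lemma dgreedy_hybrid_telescope:
  fixes f :: "(nat \<Rightarrow> real) \<Rightarrow> real"
  assumes dr: "diminishing_returns n f" and opt: "opt \<in> binvecs n" and "i \<le> n"
  defines "lo \<equiv> \<lambda>k. fst (dgreedy f n k)" and "hi \<equiv> \<lambda>k. snd (dgreedy f n k)"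
  shows "f opt - f (hybrid i (lo i) opt) \<le> (f (lo i) - f (lo 0)) + (f (hi i) - f (hi 0))"
  using \<open>i \<le> n\<close>
proof (induction i)
  case 0
  then show ?case by simp
next
  case (Suc i)
  then show ?case
    using hybrid_step_loss(1)[OF dr _ opt, of i] unfolding lo_def hi_def by simp
qed

lemma dgreedy_hybrid_mono:
  fixes f :: "(nat \<Rightarrow> real) \<Rightarrow> real"
  assumes "modular n f" and opt: "opt \<in> binvecs n" and "i \<le> n"
  shows "f opt \<le> f (hybrid i (fst (dgreedy f n i)) opt)"
  using \<open>i \<le> n\<close>
proof (induction i)
  case 0
  then show ?case by simp
next
  case (Suc i)
  then show ?case
    using hybrid_step_loss(2)[OF modular_imp_diminishing_returns _ opt, of f i] \<open>modular n f\<close>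
    by simp
qed

theorem dgreedy_one_third_approx:
  fixes f :: "(nat \<Rightarrow> real) \<Rightarrow> real"
  assumes "diminishing_returns n f" and nonneg: "\<And>y. 0 \<le> f y" and opt: "opt \<in> binvecs n"
  shows "f opt \<le> 3 * f (fst (dgreedy f n n))"
proof -
  have "f opt - f (fst (dgreedy f n n))
          \<le> (f (fst (dgreedy f n n)) - f (fst (dgreedy f n 0)))
            + (f (fst (dgreedy f n n)) - f (snd (dgreedy f n 0)))"
    using dgreedy_hybrid_telescope[OF assms(1) opt order_refl]
    by (simp add: hybrid_final[OF opt] dgreedy_final(1))
  with nonneg[of "fst (dgreedy f n 0)"] nonneg[of "snd (dgreedy f n 0)"] show ?thesis
    by linarith
qed

theorem dgreedy_optimal:
  fixes f :: "(nat \<Rightarrow> real) \<Rightarrow> real"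
  assumes "modular n f" and "opt \<in> binvecs n"
  shows "f opt \<le> f (fst (dgreedy f n n))"
  using dgreedy_hybrid_mono[OF assms order_refl] by (simp add: hybrid_final[OF assms(2)])

lemma matvec_fun_upd:
  assumes "k < n"
  shows "matvec n C (y(k := v)) = matvec n C y + (v - y k) *\<^sub>R C k"
proof -
  have "matvec n C (y(k := v)) - matvec n C y = (\<Sum>j<n. (if j = k then (v - y k) *\<^sub>R C k else 0))"
    unfolding matvec_def sum_subtractf[symmetric] scaleR_diff_left[symmetric]
    by (rule sum.cong) auto
  also have "\<dots> = (v - y k) *\<^sub>R C k"
    using assms by simp
  finally show ?thesis by (simp add: algebra_simps)
qed

lemma marginal_Theta:
  assumes "k < n"
  shows "marginal (Theta F n C x) y k = (norm (C k))\<^sup>2 / 2 - (F x - matvec n C y) \<bullet> C k"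
proof -
  have upd: "F x - matvec n C (y(k := y k + 1)) = (F x - matvec n C y) - C k"
    using matvec_fun_upd[OF assms, of C y "y k + 1"] by simp
  show ?thesis
    unfolding marginal_def Theta_def upd using dot_norm_neg[of "F x - matvec n C y" "C k"]
    by (simp add: field_simps)
qed

lemma marginal_Theta_diff:
  assumes "k < n"
  shows "marginal (Theta F n C x) y k - marginal (Theta F n C x) z k
           = (\<Sum>j<n. (y j - z j) * (C j \<bullet> C k))"
proof -
  have "marginal (Theta F n C x) y k - marginal (Theta F n C x) z k
          = (matvec n C y - matvec n C z) \<bullet> C k"
    using assms by (simp add: marginal_Theta inner_diff_left)
  also have "\<dots> = (\<Sum>j<n. (y j - z j) * (C j \<bullet> C k))"
    unfolding matvec_def sum_subtractf[symmetric] scaleR_diff_left[symmetric]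
    by (simp add: inner_sum_left)
  finally show ?thesis .
qed

lemma obtuse_imp_diminishing_returns:
  assumes "obtuse n C"
  shows "diminishing_returns n (Theta F n C x)"
  unfolding diminishing_returns_def
proof (intro allI impI)
  fix y z :: "nat \<Rightarrow> real" and k
  assume k: "k < n" and "y k = z k" and le: "\<forall>j<n. y j \<le> z j"
  have "0 \<le> (y j - z j) * (C j \<bullet> C k)" if "j < n" for j
    using assms \<open>y k = z k\<close> le that k unfolding obtuse_def
    by (cases "j = k") (auto intro: mult_nonpos_nonpos)
  then have "0 \<le> (\<Sum>j<n. (y j - z j) * (C j \<bullet> C k))"
    by (intro sum_nonneg) simp
  then show "marginal (Theta F n C x) z k \<le> marginal (Theta F n C x) y k"
    using marginal_Theta_diff[OF k, of F C x y z] by linarith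
qed

lemma orthogonal_cols_imp_modular:
  assumes "orthogonal_cols n C"
  shows "modular n (Theta F n C x)"
  unfolding modular_def
proof (intro allI impI)
  fix y z :: "nat \<Rightarrow> real" and k
  assume k: "k < n" and "y k = z k"
  have "(y j - z j) * (C j \<bullet> C k) = 0" if "j < n" for j
    using assms \<open>y k = z k\<close> that k unfolding orthogonal_cols_def by (cases "j = k") auto
  then have "(\<Sum>j<n. (y j - z j) * (C j \<bullet> C k)) = 0"
    by (intro sum.neutral) simp
  then show "marginal (Theta F n C x) z k = marginal (Theta F n C x) y k"
    using marginal_Theta_diff[OF k, of F C x y z] by linarith
qed

lemma finite_binvecs: "finite (binvecs n)"
proof (rule finite_subset)
  show "binvecs n \<subseteq> {y. \<forall>j. (j \<in> {..<n} \<longrightarrow> y j \<in> {0, 1}) \<and> (j \<notin> {..<n} \<longrightarrow> y j = 0)}"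
    by (auto simp: binvecs_def)
  show "finite {y :: nat \<Rightarrow> real. \<forall>j. (j \<in> {..<n} \<longrightarrow> y j \<in> {0, 1}) \<and> (j \<notin> {..<n} \<longrightarrow> y j = 0)}"
    by (rule finite_set_of_finite_funs) auto
qed

theorem mainTheorem9:
  fixes F :: "real^'m \<Rightarrow> real^'r" and C :: "nat \<Rightarrow> real^'r" and n :: nat and x :: "real^'m"
  assumes nonzero: "\<forall>j<n. C j \<noteq> 0"
  shows "(obtuse n C \<longrightarrow>
            Theta F n C x (dg_output F n C x) \<ge> (1/3) * Max (Theta F n C x ` binvecs n))
       \<and> (orthogonal_cols n C \<longrightarrow>
            dg_output F n C x \<in> binvecs n \<and>
            (\<forall>y\<in>binvecs n. Theta F n C x y \<le> Theta F n C x (dg_output F n C x)))"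
proof (intro conjI impI ballI)
  assume "obtuse n C"
  have "Theta F n C x y \<le> 3 * Theta F n C x (dg_output F n C x)" if "y \<in> binvecs n" for y
    unfolding dg_output_eq_dgreedy
    by (rule dgreedy_one_third_approx[OF obtuse_imp_diminishing_returns[OF \<open>obtuse n C\<close>] _ that])
      (simp add: Theta_def)
  moreover have "(\<lambda>j. 0) \<in> binvecs n"
    by (simp add: binvecs_def)
  ultimately have "Max (Theta F n C x ` binvecs n) \<le> 3 * Theta F n C x (dg_output F n C x)"
    using finite_binvecs by (subst Max_le_iff) auto
  then show "Theta F n C x (dg_output F n C x) \<ge> (1/3) * Max (Theta F n C x ` binvecs n)"
    by simp
next
  show "dg_output F n C x \<in> binvecs n"
    by (simp add: dg_output_eq_dgreedy dgreedy_final(2))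
next
  fix y assume "orthogonal_cols n C" and "y \<in> binvecs n"
  then show "Theta F n C x y \<le> Theta F n C x (dg_output F n C x)"
    by (simp add: dg_output_eq_dgreedy dgreedy_optimal orthogonal_cols_imp_modular)
qed

end
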